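(* In the setting of a softmax single-layer network with parameters $\theta_1,\dots,\theta_C\in\mathbb{R}^M$, ERM probabilities $p_i=e^{\theta_i^\top x}/\sum_je^{\theta_j^\top x}$ at the test input $x\in\mathbb{R}^M$, and $g$ defined from the training data matrix $X_N$ by $g=x_\perp/\|x_\perp\|^2$ if $x_\perp=(I-X_N^+X_N)x\neq0$ and $g=X_N^+X_N^{+\top}x/(1+x^\top X_N^+X_N^{+\top}x)$ otherwise: for each label $i$ let $\theta^{(i)}$ be obtained from $\theta$ by replacing $\theta_i$ with $\theta_i+g\big(\ln\sum_je^{\theta_j^\top x}-\theta_i^\top x\big)$. Then the pNML regret $\Gamma=\log\sum_{i=1}^C p_{\theta^{(i)}}(i\mid x)$ equals $$\Gamma=\log\sum_{i=1}^C\frac{p_i}{p_i+p_i^{\,x^\top g}(1-p_i)},$$ and the pNML assignment is $q_{\mathrm{pNML}}(i\mid x)=\dfrac{p_{\theta^{(i)}}(i\mid x)}{\sum_{k=1}^Cp_{\theta^{(k)}}(k\mid x)}$.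
   Context: $p_\theta(i\mid x)=e^{\theta_i^\top x}/\sum_{j=1}^Ce^{\theta_j^\top x}$; $X_N^+$ is the Moore–Penrose pseudo-inverse of the training data matrix $X_N\in\mathbb{R}^{N\times M}$. *)

theory Defs
  imports "HOL-Analysis.Analysis"
begin

definition pinv :: "real^'m^'n \<Rightarrow> real^'n^'m" where
  "pinv X = (THE Y. X ** Y ** X = X \<and> Y ** X ** Y = Y \<and>
                    transpose (X ** Y) = X ** Y \<and> transpose (Y ** X) = Y ** X)"

definition softmax_prob :: "('c::finite \<Rightarrow> real^'m) \<Rightarrow> real^'m \<Rightarrow> 'c \<Rightarrow> real" where
  "softmax_prob \<theta> x i = exp (\<theta> i \<bullet> x) / (\<Sum>j\<in>UNIV. exp (\<theta> j \<bullet> x))"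

definition x_perp :: "real^'m^'n \<Rightarrow> real^'m \<Rightarrow> real^'m" where
  "x_perp X x = (mat 1 - pinv X ** X) *v x"

definition g_vec :: "real^'m^'n \<Rightarrow> real^'m \<Rightarrow> real^'m" where
  "g_vec X x = (if x_perp X x \<noteq> 0 then (1 / (norm (x_perp X x))\<^sup>2) *\<^sub>R x_perp X x
     else (1 / (1 + x \<bullet> ((pinv X ** transpose (pinv X)) *v x))) *\<^sub>R
          ((pinv X ** transpose (pinv X)) *v x))"

definition theta_upd :: "real^'m^'n \<Rightarrow> ('c::finite \<Rightarrow> real^'m) \<Rightarrow> real^'m \<Rightarrow> 'c \<Rightarrow> ('c \<Rightarrow> real^'m)" where
  "theta_upd X \<theta> x i = \<theta>(i := \<theta> i + (ln (\<Sum>j\<in>UNIV. exp (\<theta> j \<bullet> x)) - \<theta> i \<bullet> x) *\<^sub>R g_vec X x)"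

end

theory Submission
  imports Defs
begin

text \<open>
  Write S for the sum of exp (\<theta> j \<bullet> x), a = \<theta> i \<bullet> x, p = exp a / S and t = x \<bullet> g.
  The update for label i moves only the logit of class i, to a + (ln S - a) t, whose
  exponential is S p powr (1 - t). So the updated probability of i is
  p powr (1 - t) / (1 - p + p powr (1 - t)) = p / (p + p powr t (1 - p)).
\<close>

lemma sum_fun_upd_UNIV:
  fixes f :: "'a::finite \<Rightarrow> 'b::ab_group_add"
  shows "(\<Sum>j\<in>UNIV. (f(i := y)) j) = (\<Sum>j\<in>UNIV. f j) - f i + y"
proof -
  have "(\<Sum>j\<in>UNIV. (f(i := y)) j) = y + (\<Sum>j\<in>UNIV - {i}. (f(i := y)) j)"
    by (subst sum.remove[of _ i]) auto
  also have "(\<Sum>j\<in>UNIV - {i}. (f(i := y)) j) = (\<Sum>j\<in>UNIV - {i}. f j)"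
    by (rule sum.cong) auto
  also have "\<dots> = (\<Sum>j\<in>UNIV. f j) - f i"
    by (simp add: sum_diff1)
  finally show ?thesis by simp
qed

lemma softmax_prob_fun_upd_self:
  "softmax_prob (\<theta>(i := v)) x i
     = exp (v \<bullet> x) / ((\<Sum>j\<in>UNIV. exp (\<theta> j \<bullet> x)) - exp (\<theta> i \<bullet> x) + exp (v \<bullet> x))"
proof -
  have "(\<lambda>j. exp ((\<theta>(i := v)) j \<bullet> x)) = (\<lambda>j. exp (\<theta> j \<bullet> x))(i := exp (v \<bullet> x))"
    by auto
  then show ?thesis
    unfolding softmax_prob_def by (simp only: sum_fun_upd_UNIV fun_upd_same)
qed

lemma exp_interpolate_ln:
  fixes a S t :: real
  assumes "S > 0"
  shows "exp (a + (ln S - a) * t) = S * (exp a / S) powr (1 - t)"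
proof -
  have "(exp a / S) powr (1 - t) = exp ((1 - t) * (a - ln S))"
    using assms by (simp add: powr_def ln_div)
  then have "S * (exp a / S) powr (1 - t) = exp (ln S + (1 - t) * (a - ln S))"
    using assms by (simp add: exp_add)
  then show ?thesis by (simp add: algebra_simps)
qed

lemma powr_one_minus_ratio:
  fixes p t :: real
  assumes "p > 0"
  shows "p powr (1 - t) / (1 - p + p powr (1 - t)) = p / (p + p powr t * (1 - p))"
proof -
  define q where "q = p powr t"
  have "q > 0"
    using assms by (simp add: q_def)
  have "p powr (1 - t) = p / q"
    using assms by (simp add: powr_diff q_def)
  moreover have "1 - p + p / q = (p + q * (1 - p)) / q"
    using \<open>q > 0\<close> by (simp add: field_simps)
  ultimately show ?thesis
    using \<open>q > 0\<close> by (simp add: q_def)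
qed

lemma softmax_prob_theta_upd_self:
  "softmax_prob (theta_upd X \<theta> x i) x i
     = softmax_prob \<theta> x i /
       (softmax_prob \<theta> x i + softmax_prob \<theta> x i powr (x \<bullet> g_vec X x) * (1 - softmax_prob \<theta> x i))"
proof -
  define S where "S = (\<Sum>j\<in>UNIV. exp (\<theta> j \<bullet> x))"
  define a where "a = \<theta> i \<bullet> x"
  define t where "t = x \<bullet> g_vec X x"
  define p where "p = exp a / S"
  have "S > 0"
    unfolding S_def by (rule sum_pos) auto
  have p: "softmax_prob \<theta> x i = p"
    unfolding softmax_prob_def p_def S_def a_def ..
  have "(\<theta> i + (ln S - a) *\<^sub>R g_vec X x) \<bullet> x = a + (ln S - a) * t"
    unfolding a_def t_def inner_add_left inner_scaleR_left by (simp add: inner_commute)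
  then have "softmax_prob (theta_upd X \<theta> x i) x i = S * p powr (1 - t) / (S - exp a + S * p powr (1 - t))"
    unfolding theta_upd_def softmax_prob_fun_upd_self
    by (simp add: exp_interpolate_ln[OF \<open>S > 0\<close>] p_def flip: S_def a_def)
  also have "\<dots> = p powr (1 - t) / (1 - p + p powr (1 - t))"
    using \<open>S > 0\<close> by (simp add: p_def field_simps)
  also have "\<dots> = p / (p + p powr t * (1 - p))"
    using \<open>S > 0\<close> by (intro powr_one_minus_ratio) (simp add: p_def)
  finally show ?thesis
    unfolding p t_def .
qed

theorem mainTheorem12:
  fixes X :: "real^'m^'n" and \<theta> :: "'c::finite \<Rightarrow> real^'m" and x :: "real^'m"
  shows "ln (\<Sum>i\<in>UNIV. softmax_prob (theta_upd X \<theta> x i) x i)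
           = ln (\<Sum>i\<in>UNIV. softmax_prob \<theta> x i /
                 (softmax_prob \<theta> x i + softmax_prob \<theta> x i powr (x \<bullet> g_vec X x) * (1 - softmax_prob \<theta> x i)))
       \<and> (\<forall>i. softmax_prob (theta_upd X \<theta> x i) x i / (\<Sum>k\<in>UNIV. softmax_prob (theta_upd X \<theta> x k) x k)
           = (softmax_prob \<theta> x i /
                 (softmax_prob \<theta> x i + softmax_prob \<theta> x i powr (x \<bullet> g_vec X x) * (1 - softmax_prob \<theta> x i)))
             / (\<Sum>k\<in>UNIV. softmax_prob \<theta> x k /
                 (softmax_prob \<theta> x k + softmax_prob \<theta> x k powr (x \<bullet> g_vec X x) * (1 - softmax_prob \<theta> x k))))"
  by (simp add: softmax_prob_theta_upd_self)

end
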